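(* Assume (A1)–(A3) and let $\bar u_{\bar e}\in S(\bar e)$. Then for every $u^*\in L^2(\Omega)$, $\widehat D^*\mathcal G(\bar e,\bar u_{\bar e})(u^* )=\{e^*\in E^*: e^*=(0,0,e^*_\alpha,e^*_\beta),\ u^*=u^*_1-u^*_2,\ u^*_1=e^*_\alpha+e^*_\beta,\ u^*_2\in N(\bar u_{\bar e};\mathcal Q),\ e^*_\alpha\ge0\text{ on }\Omega_1(\bar e,\bar u_{\bar e}),\ e^*_\alpha=0\text{ on }\Omega\setminus\Omega_1(\bar e,\bar u_{\bar e}),\ e^*_\beta\le0\text{ on }\Omega_3(\bar e,\bar u_{\bar e}),\ e^*_\beta=0\text{ on }\Omega\setminus\Omega_3(\bar e,\bar u_{\bar e})\}$.
   Context: Let $\Omega\subset\mathbb R^N$, $N\in\{1,2,3\}$; $\alpha,\beta\in L^\infty(\Omega)$, $\alpha\le\beta$, $\alpha\not\equiv\beta$; $\zeta\in L^2(\Omega)$, $\zeta\ge0$. $Ay=-\sum_{i,j}\partial_{x_j}(a_{ij}\partial_{x_i}y)$. $L,f$ Carathéodory, $C^2$ in $y$, with (A1) $f(\cdot,0)\in L^{\bar p}$, $\bar p>N/2$, $\partial f/\partial y\ge0$, $|\partial f/\partial y|+|\partial^2f/\partial y^2|\le C_{f,M}$ for $|y|\le M$, $\partial^2f/\partial y^2(x,\cdot)$ uniformly continuous on $[-M,M]$ uniformly in $x$; (A2) $L(\cdot,0)\in L^1$, $|\partial L/\partial y|\le\psi_M\in L^{\bar p}$, $|\partial^2L/\partial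 y^2|\le C_{L,M}$ for $|y|\le M$, $\partial^2L/\partial y^2(x,\cdot)$ uniformly continuous likewise; (A3) $\Omega$ open bounded with Lipschitz boundary $\Gamma$, $\mathcal Q\subset L^2(\Omega)$ closed convex bounded with $\mathcal U_{ad}(e)\cap\operatorname{int}\mathcal Q\ne\emptyset$ for some $e$, $a_{ij}\in C(\bar\Omega)$ uniformly elliptic. $y_u$ solves $Ay+f(x,y)=u$, $y=0$ on $\Gamma$; $J(u)=\int_\Omega L(x,y_u)+\frac12\int_\Omega\zeta u^2$. $E=L^2(\Omega)^4$, $e=(e_y,e_J,e_\alpha,e_\beta)$; $\mathcal U_{ad}(e)=\{u\in L^2:\alpha+e_\alpha\le u\le\beta+e_\beta\text{ a.e.}\}$, $\mathcal G(e)=\mathcal U_{ad}(e)\cap\mathcal Q$; $\mathcal J(u,e)=J(u+e_y)+(e_J,y_{u+e_y})_{L^2}$; $\mu(e)=\inf_{u\in\mathcal G(e)}\mathcal J(u,e)$; $S(e)=\{u\in\mathcal G(e):\mathcal J(u,e)=\mu(e)\}$. $\Omega_1(e,u)=\{x:u(x)=\alpha(x)+e_\alpha(x)\}$, $\Omega_3(e,u)=\{x:u(x)=\beta(x)+e_\beta(x)\}$. $N(\cdot;\mathcal Q)$ is the normal cone of convex analysis. The regular coderivative is $\widehat D^*\mathcal G(\bar e,\bar u)(u^* )=\{e^*\in E^*:(e^*,-u^* )\in\widehat N((\bar e,\bar u);\operatorname{gph}\mathcal G)\}$, with $\widehat N$ the regular (Fréchet) normal cone. *)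

theory Defs
  imports "HOL-Analysis.Analysis"
begin

type_synonym 'n fn = "real^'n \<Rightarrow> real"
type_synonym 'n E = "'n fn \<times> 'n fn \<times> 'n fn \<times> 'n fn"

section \<open>Lebesgue spaces on a domain (functions as representatives of classes)\<close>

definition L2 :: "(real^'n) set \<Rightarrow> 'n fn set" where
  "L2 \<Omega> = {f. f \<in> borel_measurable (lebesgue_on \<Omega>) \<and>
               integrable (lebesgue_on \<Omega>) (\<lambda>x. (f x)^2)}"

definition Lp :: "(real^'n) set \<Rightarrow> real \<Rightarrow> 'n fn set" where
  "Lp \<Omega> p = {f. f \<in> borel_measurable (lebesgue_on \<Omega>) \<and>
               integrable (lebesgue_on \<Omega>) (\<lambda>x. \<bar>f x\<bar> powr p)}"

definition Linf :: "(real^'n) set \<Rightarrow> 'n fn set" where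
  "Linf \<Omega> = {f. f \<in> borel_measurable (lebesgue_on \<Omega>) \<and>
               (\<exists>C. AE x in lebesgue_on \<Omega>. \<bar>f x\<bar> \<le> C)}"

definition ipL2 :: "(real^'n) set \<Rightarrow> 'n fn \<Rightarrow> 'n fn \<Rightarrow> real" where
  "ipL2 \<Omega> f g = (\<integral>x. f x * g x \<partial>lebesgue_on \<Omega>)"

definition nrmL2 :: "(real^'n) set \<Rightarrow> 'n fn \<Rightarrow> real" where
  "nrmL2 \<Omega> f = sqrt (ipL2 \<Omega> f f)"

definition ey :: "'n E \<Rightarrow> 'n fn" where "ey e = fst e"
definition eJ :: "'n E \<Rightarrow> 'n fn" where "eJ e = fst (snd e)"
definition ea :: "'n E \<Rightarrow> 'n fn" where "ea e = fst (snd (snd e))"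
definition eb :: "'n E \<Rightarrow> 'n fn" where "eb e = snd (snd (snd e))"

definition EL2 :: "(real^'n) set \<Rightarrow> 'n E set" where
  "EL2 \<Omega> = {e. ey e \<in> L2 \<Omega> \<and> eJ e \<in> L2 \<Omega> \<and> ea e \<in> L2 \<Omega> \<and> eb e \<in> L2 \<Omega>}"

definition ipE :: "(real^'n) set \<Rightarrow> 'n E \<Rightarrow> 'n E \<Rightarrow> real" where
  "ipE \<Omega> e e' = ipL2 \<Omega> (ey e) (ey e') + ipL2 \<Omega> (eJ e) (eJ e')
                 + ipL2 \<Omega> (ea e) (ea e') + ipL2 \<Omega> (eb e) (eb e')"

definition subE :: "'n E \<Rightarrow> 'n E \<Rightarrow> 'n E" where
  "subE e e' = ((\<lambda>x. ey e x - ey e' x), (\<lambda>x. eJ e x - eJ e' x),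
                (\<lambda>x. ea e x - ea e' x), (\<lambda>x. eb e x - eb e' x))"

definition ipX :: "(real^'n) set \<Rightarrow> 'n E \<times> 'n fn \<Rightarrow> 'n E \<times> 'n fn \<Rightarrow> real" where
  "ipX \<Omega> z w = ipE \<Omega> (fst z) (fst w) + ipL2 \<Omega> (snd z) (snd w)"

definition nrmX :: "(real^'n) set \<Rightarrow> 'n E \<times> 'n fn \<Rightarrow> real" where
  "nrmX \<Omega> z = sqrt (ipX \<Omega> z z)"

definition subX :: "'n E \<times> 'n fn \<Rightarrow> 'n E \<times> 'n fn \<Rightarrow> 'n E \<times> 'n fn" where
  "subX z w = (subE (fst z) (fst w), (\<lambda>x. snd z x - snd w x))"

text \<open>Regular (Frechet) normal cone to S at z in the Hilbert space E x L2, with the dual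
  identified with the space itself via the L2 inner product:
  limsup_{w -> z, w in S} <z*, w - z> / ||w - z|| <= 0, written in epsilon-delta form.\<close>
definition reg_normal :: "(real^'n) set \<Rightarrow> ('n E \<times> 'n fn) set \<Rightarrow> 'n E \<times> 'n fn
                          \<Rightarrow> ('n E \<times> 'n fn) set" where
  "reg_normal \<Omega> S z =
     (if z \<in> S then
       {zs. fst zs \<in> EL2 \<Omega> \<and> snd zs \<in> L2 \<Omega> \<and>
          (\<forall>\<epsilon>>0. \<exists>\<delta>>0. \<forall>w\<in>S. nrmX \<Omega> (subX w z) < \<delta> \<longrightarrow>
                 ipX \<Omega> zs (subX w z) \<le> \<epsilon> * nrmX \<Omega> (subX w z))}
      else {})"

definition normal_cone_L2 :: "(real^'n) set \<Rightarrow> 'n fn set \<Rightarrow> 'n fn \<Rightarrow> 'n fn set" where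
  "normal_cone_L2 \<Omega> Q u =
     (if u \<in> Q then {v \<in> L2 \<Omega>. \<forall>q\<in>Q. ipL2 \<Omega> v (\<lambda>x. q x - u x) \<le> 0} else {})"

definition Uad :: "(real^'n) set \<Rightarrow> 'n fn \<Rightarrow> 'n fn \<Rightarrow> 'n E \<Rightarrow> 'n fn set" where
  "Uad \<Omega> \<alpha> \<beta> e = {u \<in> L2 \<Omega>. AE x in lebesgue_on \<Omega>.
                       \<alpha> x + ea e x \<le> u x \<and> u x \<le> \<beta> x + eb e x}"

definition Gmap :: "(real^'n) set \<Rightarrow> 'n fn \<Rightarrow> 'n fn \<Rightarrow> 'n fn set \<Rightarrow> 'n E \<Rightarrow> 'n fn set" where
  "Gmap \<Omega> \<alpha> \<beta> Q e = Uad \<Omega> \<alpha> \<beta> e \<inter> Q"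

definition gphG :: "(real^'n) set \<Rightarrow> 'n fn \<Rightarrow> 'n fn \<Rightarrow> 'n fn set \<Rightarrow> ('n E \<times> 'n fn) set" where
  "gphG \<Omega> \<alpha> \<beta> Q = {(e, u). e \<in> EL2 \<Omega> \<and> u \<in> Gmap \<Omega> \<alpha> \<beta> Q e}"

definition coderivG :: "(real^'n) set \<Rightarrow> 'n fn \<Rightarrow> 'n fn \<Rightarrow> 'n fn set \<Rightarrow> 'n E \<Rightarrow> 'n fn
                        \<Rightarrow> 'n fn \<Rightarrow> 'n E set" where
  "coderivG \<Omega> \<alpha> \<beta> Q e u us =
     {es \<in> EL2 \<Omega>. (es, (\<lambda>x. - us x)) \<in> reg_normal \<Omega> (gphG \<Omega> \<alpha> \<beta> Q) (e, u)}"

definition Omega1 :: "(real^'n) set \<Rightarrow> 'n fn \<Rightarrow> 'n E \<Rightarrow> 'n fn \<Rightarrow> (real^'n) set" where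
  "Omega1 \<Omega> \<alpha> e u = {x \<in> \<Omega>. u x = \<alpha> x + ea e x}"

definition Omega3 :: "(real^'n) set \<Rightarrow> 'n fn \<Rightarrow> 'n E \<Rightarrow> 'n fn \<Rightarrow> (real^'n) set" where
  "Omega3 \<Omega> \<beta> e u = {x \<in> \<Omega>. u x = \<beta> x + eb e x}"

definition pd :: "'n::finite \<Rightarrow> 'n fn \<Rightarrow> 'n fn" where
  "pd i \<phi> = (\<lambda>x. frechet_derivative \<phi> (at x) (axis i 1))"

definition smooth_fn :: "('n::finite) fn \<Rightarrow> bool" where
  "smooth_fn \<phi> \<longleftrightarrow> (\<forall>is :: 'n list. \<forall>x. (foldr pd is \<phi>) differentiable (at x))"

definition testfun :: "(real^'n::finite) set \<Rightarrow> 'n fn \<Rightarrow> bool" where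
  "testfun \<Omega> \<phi> \<longleftrightarrow> smooth_fn \<phi> \<and> (\<exists>K. compact K \<and> K \<subseteq> \<Omega> \<and> (\<forall>x. x \<notin> K \<longrightarrow> \<phi> x = 0))"

definition weak_pd :: "(real^'n::finite) set \<Rightarrow> 'n \<Rightarrow> 'n fn \<Rightarrow> 'n fn \<Rightarrow> bool" where
  "weak_pd \<Omega> i y g \<longleftrightarrow> (\<forall>\<phi>. testfun \<Omega> \<phi> \<longrightarrow>
      (\<integral>x. y x * pd i \<phi> x \<partial>lebesgue_on \<Omega>) = - (\<integral>x. g x * \<phi> x \<partial>lebesgue_on \<Omega>))"

definition H10 :: "(real^'n::finite) set \<Rightarrow> 'n fn set" where
  "H10 \<Omega> = {y. y \<in> L2 \<Omega> \<and> (\<exists>Gr. (\<forall>i. Gr i \<in> L2 \<Omega> \<and> weak_pd \<Omega> i y (Gr i)) \<and>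
        (\<forall>\<epsilon>>0. \<exists>\<phi>. testfun \<Omega> \<phi> \<and>
           (nrmL2 \<Omega> (\<lambda>x. y x - \<phi> x))^2 + (\<Sum>i\<in>UNIV. (nrmL2 \<Omega> (\<lambda>x. Gr i x - pd i \<phi> x))^2)
             < \<epsilon>^2))}"

text \<open>y is a (bounded) weak solution of  A y + f(x,y) = u in Omega, y = 0 on the boundary,
  where A y = - sum_{i,j} d_{x_j} (a_ij d_{x_i} y).\<close>
definition weak_sol :: "(real^'n::finite) set \<Rightarrow> ('n \<Rightarrow> 'n \<Rightarrow> 'n fn)
                        \<Rightarrow> (real^'n \<Rightarrow> real \<Rightarrow> real) \<Rightarrow> 'n fn \<Rightarrow> 'n fn \<Rightarrow> bool" where
  "weak_sol \<Omega> a f u y \<longleftrightarrow> y \<in> H10 \<Omega> \<and> y \<in> Linf \<Omega> \<and>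
     (\<exists>Gr. (\<forall>i. Gr i \<in> L2 \<Omega> \<and> weak_pd \<Omega> i y (Gr i)) \<and>
        (\<forall>\<phi>. testfun \<Omega> \<phi> \<longrightarrow>
          (\<integral>x. (\<Sum>i\<in>UNIV. \<Sum>j\<in>UNIV. a i j x * Gr i x * pd j \<phi> x) + f x (y x) * \<phi> x
               \<partial>lebesgue_on \<Omega>)
          = (\<integral>x. u x * \<phi> x \<partial>lebesgue_on \<Omega>)))"

definition ysol :: "(real^'n::finite) set \<Rightarrow> ('n \<Rightarrow> 'n \<Rightarrow> 'n fn)
                    \<Rightarrow> (real^'n \<Rightarrow> real \<Rightarrow> real) \<Rightarrow> 'n fn \<Rightarrow> 'n fn" where
  "ysol \<Omega> a f u = (SOME y. weak_sol \<Omega> a f u y)"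

definition Jcost :: "(real^'n::finite) set \<Rightarrow> ('n \<Rightarrow> 'n \<Rightarrow> 'n fn) \<Rightarrow> (real^'n \<Rightarrow> real \<Rightarrow> real)
                     \<Rightarrow> (real^'n \<Rightarrow> real \<Rightarrow> real) \<Rightarrow> 'n fn \<Rightarrow> 'n fn \<Rightarrow> real" where
  "Jcost \<Omega> a f L \<zeta> u = (\<integral>x. L x (ysol \<Omega> a f u x) \<partial>lebesgue_on \<Omega>)
                          + 1/2 * (\<integral>x. \<zeta> x * (u x)^2 \<partial>lebesgue_on \<Omega>)"

definition calJ :: "(real^'n::finite) set \<Rightarrow> ('n \<Rightarrow> 'n \<Rightarrow> 'n fn) \<Rightarrow> (real^'n \<Rightarrow> real \<Rightarrow> real)
                     \<Rightarrow> (real^'n \<Rightarrow> real \<Rightarrow> real) \<Rightarrow> 'n fn \<Rightarrow> 'n fn \<Rightarrow> 'n E \<Rightarrow> real" where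
  "calJ \<Omega> a f L \<zeta> u e = Jcost \<Omega> a f L \<zeta> (\<lambda>x. u x + ey e x)
        + ipL2 \<Omega> (eJ e) (ysol \<Omega> a f (\<lambda>x. u x + ey e x))"

definition Ssol :: "(real^'n::finite) set \<Rightarrow> ('n \<Rightarrow> 'n \<Rightarrow> 'n fn) \<Rightarrow> (real^'n \<Rightarrow> real \<Rightarrow> real)
                  \<Rightarrow> (real^'n \<Rightarrow> real \<Rightarrow> real) \<Rightarrow> 'n fn \<Rightarrow> 'n fn \<Rightarrow> 'n fn \<Rightarrow> 'n fn set
                  \<Rightarrow> 'n E \<Rightarrow> 'n fn set" where
  "Ssol \<Omega> a f L \<zeta> \<alpha> \<beta> Q e =
     {u \<in> Gmap \<Omega> \<alpha> \<beta> Q e. \<forall>v \<in> Gmap \<Omega> \<alpha> \<beta> Q e. calJ \<Omega> a f L \<zeta> u e \<le> calJ \<Omega> a f L \<zeta> v e}"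

definition carath_C2 :: "(real^'n::finite) set \<Rightarrow> (real^'n \<Rightarrow> real \<Rightarrow> real) \<Rightarrow> bool" where
  "carath_C2 \<Omega> g \<longleftrightarrow> (\<forall>y. (\<lambda>x. g x y) \<in> borel_measurable (lebesgue_on \<Omega>)) \<and>
     (AE x in lebesgue_on \<Omega>. continuous_on UNIV (g x) \<and>
        (\<forall>y. (g x has_real_derivative deriv (g x) y) (at y) \<and>
             (deriv (g x) has_real_derivative deriv (deriv (g x)) y) (at y)) \<and>
        continuous_on UNIV (deriv (deriv (g x))))"

definition unif_cont_d2 :: "(real^'n::finite) set \<Rightarrow> (real^'n \<Rightarrow> real \<Rightarrow> real) \<Rightarrow> bool" where
  "unif_cont_d2 \<Omega> g \<longleftrightarrow> (\<forall>M \<epsilon>. \<epsilon> > 0 \<longrightarrow> (\<exists>\<delta>>0. AE x in lebesgue_on \<Omega>.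
      \<forall>y1 y2. \<bar>y1\<bar> \<le> M \<longrightarrow> \<bar>y2\<bar> \<le> M \<longrightarrow> \<bar>y1 - y2\<bar> < \<delta> \<longrightarrow>
         \<bar>deriv (deriv (g x)) y1 - deriv (deriv (g x)) y2\<bar> < \<epsilon>))"

definition assmA1 :: "(real^'n::finite) set \<Rightarrow> real \<Rightarrow> (real^'n \<Rightarrow> real \<Rightarrow> real) \<Rightarrow> bool" where
  "assmA1 \<Omega> p f \<longleftrightarrow> carath_C2 \<Omega> f \<and> (\<lambda>x. f x 0) \<in> Lp \<Omega> p \<and>
     (AE x in lebesgue_on \<Omega>. \<forall>y. deriv (f x) y \<ge> 0) \<and>
     (\<forall>M. \<exists>C. AE x in lebesgue_on \<Omega>. \<forall>y. \<bar>y\<bar> \<le> M \<longrightarrow>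
         \<bar>deriv (f x) y\<bar> + \<bar>deriv (deriv (f x)) y\<bar> \<le> C) \<and>
     unif_cont_d2 \<Omega> f"

definition assmA2 :: "(real^'n::finite) set \<Rightarrow> real \<Rightarrow> (real^'n \<Rightarrow> real \<Rightarrow> real) \<Rightarrow> bool" where
  "assmA2 \<Omega> p L \<longleftrightarrow> carath_C2 \<Omega> L \<and> integrable (lebesgue_on \<Omega>) (\<lambda>x. L x 0) \<and>
     (\<forall>M. \<exists>\<psi>. \<psi> \<in> Lp \<Omega> p \<and> (AE x in lebesgue_on \<Omega>. \<forall>y. \<bar>y\<bar> \<le> M \<longrightarrow>
         \<bar>deriv (L x) y\<bar> \<le> \<psi> x)) \<and>
     (\<forall>M. \<exists>C. AE x in lebesgue_on \<Omega>. \<forall>y. \<bar>y\<bar> \<le> M \<longrightarrow> \<bar>deriv (deriv (L x)) y\<bar> \<le> C) \<and>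
     unif_cont_d2 \<Omega> L"

text \<open>Lipschitz boundary: near each boundary point, after a rigid motion, Omega is the
  region below the graph of a Lipschitz function of the remaining N-1 coordinates.\<close>
definition lipschitz_boundary :: "(real^'n::finite) set \<Rightarrow> bool" where
  "lipschitz_boundary \<Omega> \<longleftrightarrow> (\<forall>x0 \<in> frontier \<Omega>. \<exists>r>0. \<exists>(R::real^'n \<Rightarrow> real^'n) (j::'n) (g::real^'n \<Rightarrow> real) (K::real).
      orthogonal_transformation R \<and>
      (\<forall>z w. (\<forall>i. i \<noteq> j \<longrightarrow> z$i = w$i) \<longrightarrow> g z = g w) \<and>
      K-lipschitz_on UNIV g \<and>
      (\<forall>x \<in> ball x0 r. x \<in> \<Omega> \<longleftrightarrow> (R (x - x0))$j < g (R (x - x0))))"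

definition unif_elliptic :: "(real^'n::finite) set \<Rightarrow> ('n \<Rightarrow> 'n \<Rightarrow> 'n fn) \<Rightarrow> bool" where
  "unif_elliptic \<Omega> a \<longleftrightarrow> (\<exists>\<Lambda>>0. \<forall>x\<in>closure \<Omega>. \<forall>\<xi>::real^'n.
      (\<Sum>i\<in>UNIV. \<Sum>j\<in>UNIV. a i j x * \<xi>$i * \<xi>$j) \<ge> \<Lambda> * (norm \<xi>)^2)"

definition L2_closed :: "(real^'n::finite) set \<Rightarrow> 'n fn set \<Rightarrow> bool" where
  "L2_closed \<Omega> Q \<longleftrightarrow> (\<forall>s l. (\<forall>n. s n \<in> Q) \<longrightarrow> l \<in> L2 \<Omega> \<longrightarrow>
      (\<lambda>n. nrmL2 \<Omega> (\<lambda>x. s n x - l x)) \<longlonglongrightarrow> 0 \<longrightarrow> l \<in> Q)"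

definition L2_convex :: "'n fn set \<Rightarrow> bool" where
  "L2_convex Q \<longleftrightarrow> (\<forall>u\<in>Q. \<forall>v\<in>Q. \<forall>t::real. 0 \<le> t \<longrightarrow> t \<le> 1 \<longrightarrow>
      (\<lambda>x. (1 - t) * u x + t * v x) \<in> Q)"

definition L2_bounded :: "(real^'n::finite) set \<Rightarrow> 'n fn set \<Rightarrow> bool" where
  "L2_bounded \<Omega> Q \<longleftrightarrow> (\<exists>C. \<forall>q\<in>Q. nrmL2 \<Omega> q \<le> C)"

definition L2_interior :: "(real^'n::finite) set \<Rightarrow> 'n fn set \<Rightarrow> 'n fn set" where
  "L2_interior \<Omega> Q = {u \<in> L2 \<Omega>. \<exists>r>0. \<forall>v\<in>L2 \<Omega>. nrmL2 \<Omega> (\<lambda>x. v x - u x) < r \<longrightarrow> v \<in> Q}"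

end

theory Submission
  imports Defs
begin

text \<open>The graph of G is convex. Testing a normal
  (e*, -u*) against feasible rays: e_y and e_J do not enter the constraints, so e*_y = e*_J = 0;
  moving e_\<alpha>, e_\<beta> and u together by q - ubar gives e*_\<alpha> + e*_\<beta> - u* \<in> N(ubar; Q); moving e_\<alpha>
  alone by min(ubar - \<alpha> - ebar_\<alpha>, e*_\<alpha>), and e_\<beta> symmetrically, gives the sign and
  complementarity conditions on \<Omega>_1 and \<Omega>_3. Conversely, these conditions make
  (e*, -u*) pointwise nonpositive against w - (ebar, ubar) for every w in the graph.\<close>

lemma E_components [simp]:
  "ey (a, b, c, d) = a" "eJ (a, b, c, d) = b" "ea (a, b, c, d) = c" "eb (a, b, c, d) = d"
  by (simp_all add: ey_def eJ_def ea_def eb_def)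

lemma L2_zero [simp]: "(\<lambda>x. 0) \<in> L2 \<Omega>"
  by (simp add: L2_def)

lemma L2_measurable: "f \<in> L2 \<Omega> \<Longrightarrow> f \<in> borel_measurable (lebesgue_on \<Omega>)"
  by (simp add: L2_def)

lemma L2_integrable_mult:
  assumes "f \<in> L2 \<Omega>" "g \<in> L2 \<Omega>"
  shows "integrable (lebesgue_on \<Omega>) (\<lambda>x. f x * g x)"
proof (rule Bochner_Integration.integrable_bound)
  show "integrable (lebesgue_on \<Omega>) (\<lambda>x. (f x)\<^sup>2 + (g x)\<^sup>2)"
    using assms by (simp add: L2_def)
  show "(\<lambda>x. f x * g x) \<in> borel_measurable (lebesgue_on \<Omega>)"
    using assms by (simp add: L2_def borel_measurable_times)
  have "\<bar>f x * g x\<bar> \<le> (f x)\<^sup>2 + (g x)\<^sup>2" for x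
  proof -
    have "2 * \<bar>f x * g x\<bar> \<le> (f x)\<^sup>2 + (g x)\<^sup>2"
      using zero_le_power2[of "\<bar>f x\<bar> - \<bar>g x\<bar>"] by (simp add: power2_diff abs_mult)
    then show ?thesis
      using abs_ge_zero[of "f x * g x"] by linarith
  qed
  then show "AE x in lebesgue_on \<Omega>. norm (f x * g x) \<le> norm ((f x)\<^sup>2 + (g x)\<^sup>2)"
    by (intro AE_I2) simp
qed

lemma L2_dominated:
  assumes "g \<in> L2 \<Omega>" "h \<in> borel_measurable (lebesgue_on \<Omega>)"
    and "AE x in lebesgue_on \<Omega>. \<bar>h x\<bar> \<le> \<bar>g x\<bar>"
  shows "h \<in> L2 \<Omega>"
proof -
  have "integrable (lebesgue_on \<Omega>) (\<lambda>x. (h x)\<^sup>2)"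
  proof (rule Bochner_Integration.integrable_bound)
    show "integrable (lebesgue_on \<Omega>) (\<lambda>x. (g x)\<^sup>2)"
      using assms(1) by (simp add: L2_def)
    show "AE x in lebesgue_on \<Omega>. norm ((h x)\<^sup>2) \<le> norm ((g x)\<^sup>2)"
      using assms(3) by eventually_elim (simp add: abs_le_square_iff)
  qed (use assms(2) in simp)
  then show ?thesis
    using assms(2) by (simp add: L2_def)
qed

lemma L2_add:
  assumes "f \<in> L2 \<Omega>" "g \<in> L2 \<Omega>"
  shows "(\<lambda>x. f x + g x) \<in> L2 \<Omega>"
proof -
  have "integrable (lebesgue_on \<Omega>) (\<lambda>x. (f x)\<^sup>2 + 2 * (f x * g x) + (g x)\<^sup>2)"
    using assms L2_integrable_mult[OF assms] by (simp add: L2_def)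
  then have "integrable (lebesgue_on \<Omega>) (\<lambda>x. (f x + g x)\<^sup>2)"
    by (simp add: power2_sum algebra_simps)
  then show ?thesis
    using assms by (simp add: L2_def borel_measurable_add)
qed

lemma L2_cmult: "f \<in> L2 \<Omega> \<Longrightarrow> (\<lambda>x. c * f x) \<in> L2 \<Omega>"
  by (simp add: L2_def power_mult_distrib borel_measurable_times)

lemma L2_minus: "f \<in> L2 \<Omega> \<Longrightarrow> (\<lambda>x. - f x) \<in> L2 \<Omega>"
  by (simp add: L2_def)

lemma L2_diff: "f \<in> L2 \<Omega> \<Longrightarrow> g \<in> L2 \<Omega> \<Longrightarrow> (\<lambda>x. f x - g x) \<in> L2 \<Omega>"
  using L2_add[OF _ L2_minus] by simp

lemma ipL2_zero_left [simp]: "ipL2 \<Omega> (\<lambda>x. 0) g = 0"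
  and ipL2_zero_right [simp]: "ipL2 \<Omega> f (\<lambda>x. 0) = 0"
  by (simp_all add: ipL2_def)

lemma ipL2_minus_left: "ipL2 \<Omega> (\<lambda>x. - f x) g = - ipL2 \<Omega> f g"
  by (simp add: ipL2_def)

lemma ipL2_cmult_right: "ipL2 \<Omega> f (\<lambda>x. c * g x) = c * ipL2 \<Omega> f g"
  by (simp add: ipL2_def mult.left_commute)

lemma ipL2_add_left:
  "f \<in> L2 \<Omega> \<Longrightarrow> g \<in> L2 \<Omega> \<Longrightarrow> h \<in> L2 \<Omega> \<Longrightarrow>
    ipL2 \<Omega> (\<lambda>x. f x + g x) h = ipL2 \<Omega> f h + ipL2 \<Omega> g h"
  unfolding ipL2_def by (simp add: distrib_right L2_integrable_mult)

lemma ipL2_diff_left: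
  "f \<in> L2 \<Omega> \<Longrightarrow> g \<in> L2 \<Omega> \<Longrightarrow> h \<in> L2 \<Omega> \<Longrightarrow>
    ipL2 \<Omega> (\<lambda>x. f x - g x) h = ipL2 \<Omega> f h - ipL2 \<Omega> g h"
  unfolding ipL2_def by (simp add: left_diff_distrib L2_integrable_mult)

lemma ipL2_diff_right:
  "f \<in> L2 \<Omega> \<Longrightarrow> g \<in> L2 \<Omega> \<Longrightarrow> h \<in> L2 \<Omega> \<Longrightarrow>
    ipL2 \<Omega> f (\<lambda>x. g x - h x) = ipL2 \<Omega> f g - ipL2 \<Omega> f h"
  unfolding ipL2_def by (simp add: right_diff_distrib L2_integrable_mult)

lemma ipL2_minus_right: "ipL2 \<Omega> f (\<lambda>x. - g x) = - ipL2 \<Omega> f g"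
  by (simp add: ipL2_def)

lemma ipL2_cong_AE:
  assumes "f \<in> L2 \<Omega>" "g \<in> L2 \<Omega>" "h \<in> L2 \<Omega>" "AE x in lebesgue_on \<Omega>. f x = g x"
  shows "ipL2 \<Omega> f h = ipL2 \<Omega> g h"
  unfolding ipL2_def
proof (rule integral_cong_AE)
  show "AE x in lebesgue_on \<Omega>. f x * h x = g x * h x"
    using assms(4) by eventually_elim simp
qed (simp_all add: assms L2_measurable borel_measurable_times)

lemma ipL2_nonpos_AE: "AE x in lebesgue_on \<Omega>. f x * g x \<le> 0 \<Longrightarrow> ipL2 \<Omega> f g \<le> 0"
  using integral_nonneg_AE[of "\<lambda>x. - (f x * g x)"] by (simp add: ipL2_def)

lemma ipL2_self_nonneg: "0 \<le> ipL2 \<Omega> f f"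
  unfolding ipL2_def by (rule integral_nonneg_AE) simp

lemma AE_zero_of_integral_nonpos:
  fixes g :: "'a \<Rightarrow> real"
  assumes "integrable M g" "AE x in M. 0 \<le> g x" "integral\<^sup>L M g \<le> 0"
  shows "AE x in M. g x = 0"
  using assms integral_nonneg_AE[OF assms(2)] integral_nonneg_eq_0_iff_AE[OF assms(1,2)]
  by linarith

lemma AE_zero_of_ipL2_self_nonpos:
  assumes "f \<in> L2 \<Omega>" "ipL2 \<Omega> f f \<le> 0"
  shows "AE x in lebesgue_on \<Omega>. f x = 0"
proof -
  have "AE x in lebesgue_on \<Omega>. f x * f x = 0"
    using assms by (intro AE_zero_of_integral_nonpos) (auto simp: ipL2_def L2_integrable_mult)
  then show ?thesis
    by eventually_elim simp
qed

lemma L2_min_slack: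
  assumes "g \<in> L2 \<Omega>" "s \<in> borel_measurable (lebesgue_on \<Omega>)" "AE x in lebesgue_on \<Omega>. 0 \<le> s x"
  shows "(\<lambda>x. min (s x) (g x)) \<in> L2 \<Omega>"
  using assms(3) by (intro L2_dominated[OF assms(1)])
    (auto simp: assms(2) L2_measurable[OF assms(1)] borel_measurable_min elim!: eventually_mono)

lemma AE_complementarity_of_ipL2_min_nonpos:
  assumes "g \<in> L2 \<Omega>" "s \<in> borel_measurable (lebesgue_on \<Omega>)" "AE x in lebesgue_on \<Omega>. 0 \<le> s x"
    and "ipL2 \<Omega> g (\<lambda>x. min (s x) (g x)) \<le> 0"
  shows "AE x in lebesgue_on \<Omega>. 0 \<le> g x \<and> (s x \<noteq> 0 \<longrightarrow> g x = 0)"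
proof -
  have "AE x in lebesgue_on \<Omega>. 0 \<le> g x * min (s x) (g x)"
    using assms(3) by eventually_elim (auto simp: min_def zero_le_mult_iff)
  then have "AE x in lebesgue_on \<Omega>. g x * min (s x) (g x) = 0"
    using assms by (intro AE_zero_of_integral_nonpos)
      (auto simp: ipL2_def L2_integrable_mult L2_min_slack)
  with assms(3) show ?thesis
    by eventually_elim (auto simp: min_def split: if_splits)
qed

definition scaleX :: "real \<Rightarrow> 'n E \<times> 'n fn \<Rightarrow> 'n E \<times> 'n fn" where
  "scaleX t d = (((\<lambda>x. t * ey (fst d) x), (\<lambda>x. t * eJ (fst d) x), (\<lambda>x. t * ea (fst d) x),
      (\<lambda>x. t * eb (fst d) x)), (\<lambda>x. t * snd d x))"

definition addX :: "'n E \<times> 'n fn \<Rightarrow> 'n E \<times> 'n fn \<Rightarrow> 'n E \<times> 'n fn" where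
  "addX z d = (((\<lambda>x. ey (fst z) x + ey (fst d) x), (\<lambda>x. eJ (fst z) x + eJ (fst d) x),
      (\<lambda>x. ea (fst z) x + ea (fst d) x), (\<lambda>x. eb (fst z) x + eb (fst d) x)),
      (\<lambda>x. snd z x + snd d x))"

lemma subX_addX [simp]: "subX (addX z d) z = d"
  by (cases d) (auto simp: subX_def addX_def subE_def ey_def eJ_def ea_def eb_def)

lemma ipX_scaleX: "ipX \<Omega> z (scaleX t d) = t * ipX \<Omega> z d"
  by (simp add: ipX_def ipE_def scaleX_def ipL2_cmult_right algebra_simps)

lemma nrmX_nonneg: "0 \<le> nrmX \<Omega> d"
  by (simp add: nrmX_def ipX_def ipE_def ipL2_self_nonneg)

lemma nrmX_scaleX:
  assumes "0 \<le> t"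
  shows "nrmX \<Omega> (scaleX t d) = t * nrmX \<Omega> d"
proof -
  have "ipX \<Omega> (scaleX t d) (scaleX t d) = t\<^sup>2 * ipX \<Omega> d d"
    by (simp add: ipX_def ipE_def scaleX_def ipL2_def algebra_simps power2_eq_square)
  then show ?thesis
    using assms by (simp add: nrmX_def real_sqrt_mult)
qed

lemma reg_normal_ray_nonpos:
  assumes zs: "zs \<in> reg_normal \<Omega> S z"
    and ray: "\<And>t. 0 < t \<Longrightarrow> t \<le> 1 \<Longrightarrow> addX z (scaleX t d) \<in> S"
  shows "ipX \<Omega> zs d \<le> 0"
proof -
  define n where "n = nrmX \<Omega> d"
  have n: "0 \<le> n"
    by (simp add: n_def nrmX_nonneg)
  have "ipX \<Omega> zs d \<le> \<epsilon> * n" if "0 < \<epsilon>" for \<epsilon>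
  proof -
    obtain \<delta> where "0 < \<delta>" and \<delta>: "\<forall>w\<in>S. nrmX \<Omega> (subX w z) < \<delta> \<longrightarrow>
        ipX \<Omega> zs (subX w z) \<le> \<epsilon> * nrmX \<Omega> (subX w z)"
      using zs \<open>0 < \<epsilon>\<close> by (auto simp: reg_normal_def split: if_splits)
    define t where "t = min 1 (\<delta> / (2 * (n + 1)))"
    have t: "0 < t" "t \<le> 1"
      using \<open>0 < \<delta>\<close> n by (auto simp: t_def)
    have "t * n \<le> \<delta> / (2 * (n + 1)) * n"
      unfolding t_def using n by (intro mult_right_mono) auto
    also have "\<dots> < \<delta>"
      using \<open>0 < \<delta>\<close> n by (simp add: field_simps add_nonneg_pos)
    finally have "nrmX \<Omega> (scaleX t d) < \<delta>"
      using t by (simp add: nrmX_scaleX n_def)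
    then have "t * ipX \<Omega> zs d \<le> t * (\<epsilon> * n)"
      using \<delta> ray[OF t] t by (force simp: ipX_scaleX nrmX_scaleX n_def)
    then show ?thesis
      using t by simp
  qed
  from this[of "ipX \<Omega> zs d / (n + 1)"] n show ?thesis
    by (cases "0 < ipX \<Omega> zs d") (auto simp: field_simps)
qed

lemma reg_normal_of_inner_nonpos:
  assumes "z \<in> S" "fst zs \<in> EL2 \<Omega>" "snd zs \<in> L2 \<Omega>"
    and "\<And>w. w \<in> S \<Longrightarrow> ipX \<Omega> zs (subX w z) \<le> 0"
  shows "zs \<in> reg_normal \<Omega> S z"
proof -
  have "ipX \<Omega> zs (subX w z) \<le> \<epsilon> * nrmX \<Omega> (subX w z)" if "w \<in> S" "0 < \<epsilon>" for w \<epsilon>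
    using assms(4)[OF that(1)] nrmX_nonneg[of \<Omega> "subX w z"] that(2)
    by (meson less_imp_le mult_nonneg_nonneg order_trans)
  then show ?thesis
    using assms(1-3) by (auto simp: reg_normal_def intro!: exI[of _ 1])
qed

lemma gphG_rayI:
  assumes "(e, u) \<in> gphG \<Omega> \<alpha> \<beta> Q"
    and "hy \<in> L2 \<Omega>" "hJ \<in> L2 \<Omega>" "ha \<in> L2 \<Omega>" "hb \<in> L2 \<Omega>" "hu \<in> L2 \<Omega>"
    and "(\<lambda>x. u x + t * hu x) \<in> Q"
    and "AE x in lebesgue_on \<Omega>. \<alpha> x + (ea e x + t * ha x) \<le> u x + t * hu x
      \<and> u x + t * hu x \<le> \<beta> x + (eb e x + t * hb x)"
  shows "addX (e, u) (scaleX t ((hy, hJ, ha, hb), hu)) \<in> gphG \<Omega> \<alpha> \<beta> Q"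
  using assms by (auto simp: addX_def scaleX_def gphG_def EL2_def Gmap_def Uad_def L2_add L2_cmult)

lemma gphG_D:
  assumes "(e, u) \<in> gphG \<Omega> \<alpha> \<beta> Q"
  shows "ey e \<in> L2 \<Omega>" "eJ e \<in> L2 \<Omega>" "ea e \<in> L2 \<Omega>" "eb e \<in> L2 \<Omega>" "u \<in> L2 \<Omega>" "u \<in> Q"
    and "AE x in lebesgue_on \<Omega>. \<alpha> x + ea e x \<le> u x \<and> u x \<le> \<beta> x + eb e x"
  using assms by (auto simp: gphG_def EL2_def Gmap_def Uad_def)

lemma coderivG_D:
  assumes "es \<in> coderivG \<Omega> \<alpha> \<beta> Q ebar ubar us"
  shows "es \<in> EL2 \<Omega>" "us \<in> L2 \<Omega>" "(ebar, ubar) \<in> gphG \<Omega> \<alpha> \<beta> Q"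
    and "(es, \<lambda>x. - us x) \<in> reg_normal \<Omega> (gphG \<Omega> \<alpha> \<beta> Q) (ebar, ubar)"
  using assms L2_minus[of "\<lambda>x. - us x"]
  by (auto simp: coderivG_def reg_normal_def split: if_splits)

lemma coderivG_ray_nonpos:
  assumes "es \<in> coderivG \<Omega> \<alpha> \<beta> Q ebar ubar us"
    and "\<And>t. 0 < t \<Longrightarrow> t \<le> 1 \<Longrightarrow> addX (ebar, ubar) (scaleX t d) \<in> gphG \<Omega> \<alpha> \<beta> Q"
  shows "ipX \<Omega> (es, \<lambda>x. - us x) d \<le> 0"
  using reg_normal_ray_nonpos[OF coderivG_D(4)[OF assms(1)]] assms(2) by blast

lemma coderivG_ey_eJ_zero:
  assumes es: "es \<in> coderivG \<Omega> \<alpha> \<beta> Q ebar ubar us"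
  shows "AE x in lebesgue_on \<Omega>. ey es x = 0" and "AE x in lebesgue_on \<Omega>. eJ es x = 0"
proof -
  note z = coderivG_D(3)[OF es]
  note G = gphG_D[OF z]
  have ey: "ey es \<in> L2 \<Omega>" and eJ: "eJ es \<in> L2 \<Omega>"
    using coderivG_D(1)[OF es] by (auto simp: EL2_def)
  have "ipX \<Omega> (es, \<lambda>x. - us x) ((ey es, \<lambda>x. 0, \<lambda>x. 0, \<lambda>x. 0), \<lambda>x. 0) \<le> 0"
    by (rule coderivG_ray_nonpos[OF es], rule gphG_rayI) (use z G ey in simp_all)
  then show "AE x in lebesgue_on \<Omega>. ey es x = 0"
    using ey by (intro AE_zero_of_ipL2_self_nonpos) (simp_all add: ipX_def ipE_def)
  have "ipX \<Omega> (es, \<lambda>x. - us x) ((\<lambda>x. 0, eJ es, \<lambda>x. 0, \<lambda>x. 0), \<lambda>x. 0) \<le> 0"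
    by (rule coderivG_ray_nonpos[OF es], rule gphG_rayI) (use z G eJ in simp_all)
  then show "AE x in lebesgue_on \<Omega>. eJ es x = 0"
    using eJ by (intro AE_zero_of_ipL2_self_nonpos) (simp_all add: ipX_def ipE_def)
qed

lemma coderivG_normal_cone:
  assumes es: "es \<in> coderivG \<Omega> \<alpha> \<beta> Q ebar ubar us"
    and Q: "Q \<subseteq> L2 \<Omega>" "L2_convex Q"
  shows "(\<lambda>x. ea es x + eb es x - us x) \<in> normal_cone_L2 \<Omega> Q ubar"
proof -
  note z = coderivG_D(3)[OF es]
  note G = gphG_D[OF z]
  have ea: "ea es \<in> L2 \<Omega>" and eb: "eb es \<in> L2 \<Omega>" and us: "us \<in> L2 \<Omega>"
    using coderivG_D(1,2)[OF es] by (auto simp: EL2_def)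
  have "ipL2 \<Omega> (\<lambda>x. ea es x + eb es x - us x) \<delta> \<le> 0" if "q \<in> Q" and \<delta>: "\<delta> = (\<lambda>x. q x - ubar x)"
    for q \<delta>
  proof -
    have \<delta>L2: "\<delta> \<in> L2 \<Omega>"
      using \<delta> \<open>q \<in> Q\<close> Q(1) G(5) by (auto intro: L2_diff)
    have "ipX \<Omega> (es, \<lambda>x. - us x) ((\<lambda>x. 0, \<lambda>x. 0, \<delta>, \<delta>), \<delta>) \<le> 0"
    proof (rule coderivG_ray_nonpos[OF es], rule gphG_rayI)
      fix t :: real
      assume "0 < t" "t \<le> 1"
      then have "(\<lambda>x. (1 - t) * ubar x + t * q x) \<in> Q"
        using Q(2) G(6) \<open>q \<in> Q\<close> by (simp add: L2_convex_def)
      moreover have "(\<lambda>x. (1 - t) * ubar x + t * q x) = (\<lambda>x. ubar x + t * \<delta> x)"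
        by (simp add: \<delta> algebra_simps)
      ultimately show "(\<lambda>x. ubar x + t * \<delta> x) \<in> Q"
        by simp
      show "AE x in lebesgue_on \<Omega>. \<alpha> x + (ea ebar x + t * \<delta> x) \<le> ubar x + t * \<delta> x
          \<and> ubar x + t * \<delta> x \<le> \<beta> x + (eb ebar x + t * \<delta> x)"
        using G(7) by eventually_elim simp
    qed (use z \<delta>L2 in simp_all)
    then show ?thesis
      using ea eb us \<delta>L2
      by (simp add: ipX_def ipE_def ipL2_minus_left ipL2_add_left ipL2_diff_left L2_add)
  qed
  then show ?thesis
    using G(6) ea eb us by (simp add: normal_cone_L2_def L2_add L2_diff)
qed

lemma min_slack_scaled_le:
  fixes s g t :: real
  assumes "0 \<le> s" "0 < t" "t \<le> 1"
  shows "t * min s g \<le> s"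
proof -
  have "t * min s g \<le> t * s"
    using assms by (intro mult_left_mono) auto
  also have "\<dots> \<le> s"
    using assms by (simp add: mult_left_le_one_le)
  finally show ?thesis .
qed

lemma coderivG_ea_complementarity:
  assumes es: "es \<in> coderivG \<Omega> \<alpha> \<beta> Q ebar ubar us"
    and \<alpha>: "\<alpha> \<in> borel_measurable (lebesgue_on \<Omega>)"
  shows "AE x in lebesgue_on \<Omega>. 0 \<le> ea es x \<and> (x \<notin> Omega1 \<Omega> \<alpha> ebar ubar \<longrightarrow> ea es x = 0)"
proof -
  note z = coderivG_D(3)[OF es]
  note G = gphG_D[OF z]
  have ea: "ea es \<in> L2 \<Omega>"
    using coderivG_D(1)[OF es] by (simp add: EL2_def)
  define s where "s = (\<lambda>x. ubar x - \<alpha> x - ea ebar x)"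
  have s_meas: "s \<in> borel_measurable (lebesgue_on \<Omega>)"
    unfolding s_def using G(3,5) \<alpha> by (simp add: L2_measurable borel_measurable_diff)
  have s_nonneg: "AE x in lebesgue_on \<Omega>. 0 \<le> s x"
    using G(7) by eventually_elim (simp add: s_def)
  define h where "h = (\<lambda>x. min (s x) (ea es x))"
  have hL2: "h \<in> L2 \<Omega>"
    unfolding h_def using ea s_meas s_nonneg by (rule L2_min_slack)
  have "ipX \<Omega> (es, \<lambda>x. - us x) ((\<lambda>x. 0, \<lambda>x. 0, h, \<lambda>x. 0), \<lambda>x. 0) \<le> 0"
  proof (rule coderivG_ray_nonpos[OF es], rule gphG_rayI)
    fix t :: real
    assume t: "0 < t" "t \<le> 1"
    from G(7) s_nonneg show "AE x in lebesgue_on \<Omega>. \<alpha> x + (ea ebar x + t * h x) \<le> ubar x + t * 0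
        \<and> ubar x + t * 0 \<le> \<beta> x + (eb ebar x + t * 0)"
    proof eventually_elim
      case (elim x)
      have "t * h x \<le> s x"
        using min_slack_scaled_le[OF elim(2) t] by (simp add: h_def)
      with elim(1) show ?case
        by (simp add: s_def)
    qed
  qed (use z G hL2 in simp_all)
  then have "ipL2 \<Omega> (ea es) (\<lambda>x. min (s x) (ea es x)) \<le> 0"
    by (simp add: ipX_def ipE_def h_def)
  with ea s_meas s_nonneg have "AE x in lebesgue_on \<Omega>. 0 \<le> ea es x \<and> (s x \<noteq> 0 \<longrightarrow> ea es x = 0)"
    by (rule AE_complementarity_of_ipL2_min_nonpos)
  then show ?thesis
    using AE_space by eventually_elim (auto simp: Omega1_def s_def)
qed

lemma coderivG_eb_complementarity:
  assumes es: "es \<in> coderivG \<Omega> \<alpha> \<beta> Q ebar ubar us"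
    and \<beta>: "\<beta> \<in> borel_measurable (lebesgue_on \<Omega>)"
  shows "AE x in lebesgue_on \<Omega>. eb es x \<le> 0 \<and> (x \<notin> Omega3 \<Omega> \<beta> ebar ubar \<longrightarrow> eb es x = 0)"
proof -
  note z = coderivG_D(3)[OF es]
  note G = gphG_D[OF z]
  have eb: "(\<lambda>x. - eb es x) \<in> L2 \<Omega>"
    using coderivG_D(1)[OF es] by (simp add: EL2_def L2_minus)
  define s where "s = (\<lambda>x. \<beta> x + eb ebar x - ubar x)"
  have s_meas: "s \<in> borel_measurable (lebesgue_on \<Omega>)"
    unfolding s_def using G(4,5) \<beta> by (simp add: L2_measurable borel_measurable_diff borel_measurable_add)
  have s_nonneg: "AE x in lebesgue_on \<Omega>. 0 \<le> s x"
    using G(7) by eventually_elim (simp add: s_def)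
  define h where "h = (\<lambda>x. min (s x) (- eb es x))"
  have hL2: "h \<in> L2 \<Omega>"
    unfolding h_def using eb s_meas s_nonneg by (rule L2_min_slack)
  have "ipX \<Omega> (es, \<lambda>x. - us x) ((\<lambda>x. 0, \<lambda>x. 0, \<lambda>x. 0, \<lambda>x. - h x), \<lambda>x. 0) \<le> 0"
  proof (rule coderivG_ray_nonpos[OF es], rule gphG_rayI)
    fix t :: real
    assume t: "0 < t" "t \<le> 1"
    from G(7) s_nonneg show "AE x in lebesgue_on \<Omega>. \<alpha> x + (ea ebar x + t * 0) \<le> ubar x + t * 0
        \<and> ubar x + t * 0 \<le> \<beta> x + (eb ebar x + t * - h x)"
    proof eventually_elim
      case (elim x)
      have "t * h x \<le> s x"
        using min_slack_scaled_le[OF elim(2) t] by (simp add: h_def)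
      with elim(1) show ?case
        by (simp add: s_def)
    qed
  qed (use z G hL2 in \<open>simp_all add: L2_minus\<close>)
  then have "ipL2 \<Omega> (\<lambda>x. - eb es x) (\<lambda>x. min (s x) (- eb es x)) \<le> 0"
    by (simp add: ipX_def ipE_def h_def ipL2_minus_left ipL2_minus_right)
  with eb s_meas s_nonneg have "AE x in lebesgue_on \<Omega>. 0 \<le> - eb es x \<and> (s x \<noteq> 0 \<longrightarrow> - eb es x = 0)"
    by (rule AE_complementarity_of_ipL2_min_nonpos)
  then show ?thesis
    using AE_space by eventually_elim (auto simp: Omega3_def s_def)
qed

lemma ipX_graph_increment_eq:
  assumes z: "(ebar, ubar) \<in> gphG \<Omega> \<alpha> \<beta> Q" and w: "(e, u) \<in> gphG \<Omega> \<alpha> \<beta> Q"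
    and es: "es \<in> EL2 \<Omega>" and us: "us \<in> L2 \<Omega>" and u2: "u2 \<in> L2 \<Omega>"
    and ey: "AE x in lebesgue_on \<Omega>. ey es x = 0" and eJ: "AE x in lebesgue_on \<Omega>. eJ es x = 0"
    and us_eq: "AE x in lebesgue_on \<Omega>. us x = ea es x + eb es x - u2 x"
  shows "ipX \<Omega> (es, \<lambda>x. - us x) (subX (e, u) (ebar, ubar)) =
      ipL2 \<Omega> (ea es) (\<lambda>x. (ea e x - ea ebar x) - (u x - ubar x))
    + ipL2 \<Omega> (eb es) (\<lambda>x. (eb e x - eb ebar x) - (u x - ubar x))
    + ipL2 \<Omega> u2 (\<lambda>x. u x - ubar x)"
proof -
  note G = gphG_D[OF z] and W = gphG_D[OF w]
  have es_L2: "ey es \<in> L2 \<Omega>" "eJ es \<in> L2 \<Omega>" "ea es \<in> L2 \<Omega>" "eb es \<in> L2 \<Omega>"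
    using es by (auto simp: EL2_def)
  have ip_ey: "ipL2 \<Omega> (ey es) h = 0" and ip_eJ: "ipL2 \<Omega> (eJ es) h = 0"
    and ip_us: "ipL2 \<Omega> us h = ipL2 \<Omega> (\<lambda>x. ea es x + eb es x - u2 x) h"
    if "h \<in> L2 \<Omega>" for h
    using ipL2_cong_AE[OF _ L2_zero that ey] ipL2_cong_AE[OF _ L2_zero that eJ]
      ipL2_cong_AE[OF us _ that us_eq] es_L2 u2 by (simp_all add: L2_add L2_diff)
  show ?thesis
    using G W es_L2 u2
    by (simp add: ipX_def ipE_def subX_def subE_def ip_ey ip_eJ ip_us
        ipL2_minus_left ipL2_add_left ipL2_diff_left ipL2_diff_right L2_add L2_diff)
qed

lemma coderivG_memI:
  assumes z: "(ebar, ubar) \<in> gphG \<Omega> \<alpha> \<beta> Q" and es: "es \<in> EL2 \<Omega>" and us: "us \<in> L2 \<Omega>"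
    and ey: "AE x in lebesgue_on \<Omega>. ey es x = 0" and eJ: "AE x in lebesgue_on \<Omega>. eJ es x = 0"
    and u2: "u2 \<in> normal_cone_L2 \<Omega> Q ubar"
    and us_eq: "AE x in lebesgue_on \<Omega>. us x = ea es x + eb es x - u2 x"
    and ea_sign: "AE x in lebesgue_on \<Omega>. x \<in> Omega1 \<Omega> \<alpha> ebar ubar \<longrightarrow> 0 \<le> ea es x"
    and ea_zero: "AE x in lebesgue_on \<Omega>. x \<notin> Omega1 \<Omega> \<alpha> ebar ubar \<longrightarrow> ea es x = 0"
    and eb_sign: "AE x in lebesgue_on \<Omega>. x \<in> Omega3 \<Omega> \<beta> ebar ubar \<longrightarrow> eb es x \<le> 0"
    and eb_zero: "AE x in lebesgue_on \<Omega>. x \<notin> Omega3 \<Omega> \<beta> ebar ubar \<longrightarrow> eb es x = 0"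
  shows "es \<in> coderivG \<Omega> \<alpha> \<beta> Q ebar ubar us"
proof -
  have u2_L2: "u2 \<in> L2 \<Omega>"
    using u2 by (simp add: normal_cone_L2_def split: if_splits)
  have "ipX \<Omega> (es, \<lambda>x. - us x) (subX (e, u) (ebar, ubar)) \<le> 0"
    if w: "(e, u) \<in> gphG \<Omega> \<alpha> \<beta> Q" for e u
  proof -
    note W = gphG_D[OF w]
    have ea_part: "AE x in lebesgue_on \<Omega>. ea es x * ((ea e x - ea ebar x) - (u x - ubar x)) \<le> 0"
      using ea_sign ea_zero W(7)
      by eventually_elim (auto simp: Omega1_def mult_nonneg_nonpos)
    have eb_part: "AE x in lebesgue_on \<Omega>. eb es x * ((eb e x - eb ebar x) - (u x - ubar x)) \<le> 0"
      using eb_sign eb_zero W(7)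
      by eventually_elim (auto simp: Omega3_def mult_nonpos_nonneg)
    have u_part: "ipL2 \<Omega> u2 (\<lambda>x. u x - ubar x) \<le> 0"
      using u2 W(6) by (simp add: normal_cone_L2_def split: if_splits)
    show ?thesis
      using ipX_graph_increment_eq[OF z w es us u2_L2 ey eJ us_eq]
        ipL2_nonpos_AE[OF ea_part] ipL2_nonpos_AE[OF eb_part] u_part by linarith
  qed
  then have "(es, \<lambda>x. - us x) \<in> reg_normal \<Omega> (gphG \<Omega> \<alpha> \<beta> Q) (ebar, ubar)"
    using z es us by (intro reg_normal_of_inner_nonpos) (auto simp: L2_minus)
  then show ?thesis
    using es by (simp add: coderivG_def)
qed

lemma coderivG_eq:
  assumes z: "(ebar, ubar) \<in> gphG \<Omega> \<alpha> \<beta> Q" and us: "us \<in> L2 \<Omega>"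
    and Q: "Q \<subseteq> L2 \<Omega>" "L2_convex Q"
    and \<alpha>: "\<alpha> \<in> borel_measurable (lebesgue_on \<Omega>)" and \<beta>: "\<beta> \<in> borel_measurable (lebesgue_on \<Omega>)"
  shows "coderivG \<Omega> \<alpha> \<beta> Q ebar ubar us =
     {es \<in> EL2 \<Omega>.
        (AE x in lebesgue_on \<Omega>. ey es x = 0) \<and> (AE x in lebesgue_on \<Omega>. eJ es x = 0) \<and>
        (\<exists>u1 u2. u1 \<in> L2 \<Omega> \<and> u2 \<in> L2 \<Omega> \<and>
           (AE x in lebesgue_on \<Omega>. us x = u1 x - u2 x) \<and>
           (AE x in lebesgue_on \<Omega>. u1 x = ea es x + eb es x) \<and>
           u2 \<in> normal_cone_L2 \<Omega> Q ubar) \<and>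
        (AE x in lebesgue_on \<Omega>. x \<in> Omega1 \<Omega> \<alpha> ebar ubar \<longrightarrow> ea es x \<ge> 0) \<and>
        (AE x in lebesgue_on \<Omega>. x \<notin> Omega1 \<Omega> \<alpha> ebar ubar \<longrightarrow> ea es x = 0) \<and>
        (AE x in lebesgue_on \<Omega>. x \<in> Omega3 \<Omega> \<beta> ebar ubar \<longrightarrow> eb es x \<le> 0) \<and>
        (AE x in lebesgue_on \<Omega>. x \<notin> Omega3 \<Omega> \<beta> ebar ubar \<longrightarrow> eb es x = 0)}"
    (is "_ = ?R")
proof (intro equalityI subsetI)
  fix es
  assume es: "es \<in> coderivG \<Omega> \<alpha> \<beta> Q ebar ubar us"
  have "ea es \<in> L2 \<Omega>" "eb es \<in> L2 \<Omega>"
    using coderivG_D(1)[OF es] by (auto simp: EL2_def)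
  then have "\<exists>u1 u2. u1 \<in> L2 \<Omega> \<and> u2 \<in> L2 \<Omega> \<and>
      (AE x in lebesgue_on \<Omega>. us x = u1 x - u2 x) \<and>
      (AE x in lebesgue_on \<Omega>. u1 x = ea es x + eb es x) \<and> u2 \<in> normal_cone_L2 \<Omega> Q ubar"
    using us coderivG_normal_cone[OF es Q]
    by (intro exI[of _ "\<lambda>x. ea es x + eb es x"] exI[of _ "\<lambda>x. ea es x + eb es x - us x"])
      (simp add: L2_add L2_diff)
  with coderivG_D(1)[OF es] coderivG_ey_eJ_zero[OF es]
    coderivG_ea_complementarity[OF es \<alpha>] coderivG_eb_complementarity[OF es \<beta>]
  show "es \<in> ?R"
    by (auto elim: eventually_mono)
next
  fix es
  assume "es \<in> ?R"
  then obtain u1 u2 where es: "es \<in> EL2 \<Omega>" and u2: "u2 \<in> normal_cone_L2 \<Omega> Q ubar"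
    and us_eq: "AE x in lebesgue_on \<Omega>. us x = u1 x - u2 x"
    and u1_eq: "AE x in lebesgue_on \<Omega>. u1 x = ea es x + eb es x"
    and conds: "AE x in lebesgue_on \<Omega>. ey es x = 0" "AE x in lebesgue_on \<Omega>. eJ es x = 0"
      "AE x in lebesgue_on \<Omega>. x \<in> Omega1 \<Omega> \<alpha> ebar ubar \<longrightarrow> ea es x \<ge> 0"
      "AE x in lebesgue_on \<Omega>. x \<notin> Omega1 \<Omega> \<alpha> ebar ubar \<longrightarrow> ea es x = 0"
      "AE x in lebesgue_on \<Omega>. x \<in> Omega3 \<Omega> \<beta> ebar ubar \<longrightarrow> eb es x \<le> 0"
      "AE x in lebesgue_on \<Omega>. x \<notin> Omega3 \<Omega> \<beta> ebar ubar \<longrightarrow> eb es x = 0"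
    by blast
  from us_eq u1_eq have "AE x in lebesgue_on \<Omega>. us x = ea es x + eb es x - u2 x"
    by eventually_elim simp
  with z es us u2 conds show "es \<in> coderivG \<Omega> \<alpha> \<beta> Q ebar ubar us"
    by (intro coderivG_memI)
qed

theorem proposition3p3:
  fixes \<Omega> :: "(real^'n::finite) set"
    and a :: "'n \<Rightarrow> 'n \<Rightarrow> real^'n \<Rightarrow> real"
    and f L :: "real^'n \<Rightarrow> real \<Rightarrow> real"
    and \<alpha> \<beta> \<zeta> :: "real^'n \<Rightarrow> real"
    and Q :: "(real^'n \<Rightarrow> real) set"
    and pbar :: real
    and ebar :: "'n E"
    and ubar :: "real^'n \<Rightarrow> real"
  assumes dim: "CARD('n) \<le> 3"
    and alpha: "\<alpha> \<in> Linf \<Omega>" and beta: "\<beta> \<in> Linf \<Omega>"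
    and alpha_le_beta: "AE x in lebesgue_on \<Omega>. \<alpha> x \<le> \<beta> x"
    and alpha_neq_beta: "\<not> (AE x in lebesgue_on \<Omega>. \<alpha> x = \<beta> x)"
    and zeta: "\<zeta> \<in> L2 \<Omega>" "AE x in lebesgue_on \<Omega>. \<zeta> x \<ge> 0"
    and pbar: "pbar > real CARD('n) / 2"
    and A1: "assmA1 \<Omega> pbar f"
    and A2: "assmA2 \<Omega> pbar L"
    and A3_domain: "open \<Omega>" "bounded \<Omega>" "lipschitz_boundary \<Omega>"
    and A3_Q: "Q \<subseteq> L2 \<Omega>" "L2_convex Q" "L2_closed \<Omega> Q" "L2_bounded \<Omega> Q"
    and A3_slater: "\<exists>e \<in> EL2 \<Omega>. Uad \<Omega> \<alpha> \<beta> e \<inter> L2_interior \<Omega> Q \<noteq> {}"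
    and A3_coeff: "\<forall>i j. continuous_on (closure \<Omega>) (a i j)" "unif_elliptic \<Omega> a"
    and ebar: "ebar \<in> EL2 \<Omega>"
    and ubar: "ubar \<in> Ssol \<Omega> a f L \<zeta> \<alpha> \<beta> Q ebar"
  shows "\<forall>us \<in> L2 \<Omega>. coderivG \<Omega> \<alpha> \<beta> Q ebar ubar us =
     {es \<in> EL2 \<Omega>.
        (AE x in lebesgue_on \<Omega>. ey es x = 0) \<and> (AE x in lebesgue_on \<Omega>. eJ es x = 0) \<and>
        (\<exists>u1 u2. u1 \<in> L2 \<Omega> \<and> u2 \<in> L2 \<Omega> \<and>
           (AE x in lebesgue_on \<Omega>. us x = u1 x - u2 x) \<and>
           (AE x in lebesgue_on \<Omega>. u1 x = ea es x + eb es x) \<and>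
           u2 \<in> normal_cone_L2 \<Omega> Q ubar) \<and>
        (AE x in lebesgue_on \<Omega>. x \<in> Omega1 \<Omega> \<alpha> ebar ubar \<longrightarrow> ea es x \<ge> 0) \<and>
        (AE x in lebesgue_on \<Omega>. x \<notin> Omega1 \<Omega> \<alpha> ebar ubar \<longrightarrow> ea es x = 0) \<and>
        (AE x in lebesgue_on \<Omega>. x \<in> Omega3 \<Omega> \<beta> ebar ubar \<longrightarrow> eb es x \<le> 0) \<and>
        (AE x in lebesgue_on \<Omega>. x \<notin> Omega3 \<Omega> \<beta> ebar ubar \<longrightarrow> eb es x = 0)}"
proof (intro ballI coderivG_eq)
  show "(ebar, ubar) \<in> gphG \<Omega> \<alpha> \<beta> Q"
    using ebar ubar by (simp add: gphG_def Ssol_def)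
  show "\<alpha> \<in> borel_measurable (lebesgue_on \<Omega>)" "\<beta> \<in> borel_measurable (lebesgue_on \<Omega>)"
    using alpha beta by (simp_all add: Linf_def)
qed (use A3_Q in simp_all)

end
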